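(* Let $d\ge2$ and $\mathbf{Y}\sim\mathcal{SUT}_{d,m}(\boldsymbol{\xi},\boldsymbol{\Omega},\boldsymbol{\Delta},\boldsymbol{\tau},\bar{\boldsymbol{\Gamma}},\nu)$, partitioned as $\mathbf{Y}=(Y_1,\mathbf{Y}_2^\top)^\top$ with $Y_1\in\mathbb{R}$, $\mathbf{Y}_2\in\mathbb{R}^{d-1}$, and correspondingly $\boldsymbol{\xi}=(\xi_1,\boldsymbol{\xi}_2^\top)^\top$ and $\boldsymbol{\Delta}=(\boldsymbol{\Delta}_1^\top,\boldsymbol{\Delta}_2^\top)^\top$ with $\boldsymbol{\Delta}_1\in\mathbb{R}^{m}$ (a row) and $\boldsymbol{\Delta}_2\in\mathbb{R}^{(d-1)\times m}$. If $\boldsymbol{\Delta}_2=\mathbf{0}$, then $\mathbf{Y}$ is in canonical form: all skewness is carried by the first component, in the sense that $\mathbf{Y}_2-\boldsymbol{\xi}_2$ has a distribution symmetric about the origin (i.e. $\mathbf{Y}_2-\boldsymbol{\xi}_2$ and $-(\mathbf{Y}_2-\boldsymbol{\xi}_2)$ have the same distribution), while $Y_1$ has a univariate unified skew-$t$ distribution.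
   Context: Notation: $\mathcal{T}_k(\boldsymbol{\mu},\boldsymbol{\Sigma},\nu)$ is the $k$-dimensional Student $t$ distribution with location $\boldsymbol{\mu}$, dispersion $\boldsymbol{\Sigma}$ and $\nu>0$ degrees of freedom. Parameters: $\boldsymbol{\xi}\in\mathbb{R}^d$; $\boldsymbol{\Omega}$ a $d\times d$ positive definite matrix, $\boldsymbol{\omega}=\mathrm{diag}(\boldsymbol{\Omega})^{1/2}$, $\bar{\boldsymbol{\Omega}}=\boldsymbol{\omega}^{-1}\boldsymbol{\Omega}\boldsymbol{\omega}^{-1}$; $\boldsymbol{\Delta}$ a $d\times m$ matrix; $\bar{\boldsymbol{\Gamma}}$ an $m\times m$ correlation matrix; $\boldsymbol{\tau}\in\mathbb{R}^m$; $\nu>0$; with $\bar{\boldsymbol{\Omega}}^*=\begin{pmatrix}\bar{\boldsymbol{\Gamma}}&\boldsymbol{\Delta}^\top\\ \boldsymbol{\Delta}&\bar{\boldsymbol{\Omega}}\end{pmatrix}$ positive definite. Definition: if $(\mathbf{U}_0^\top,\mathbf{U}_1^\top)^\top\sim\mathcal{T}_{m+d}(\mathbf{0},\bar{\boldsymbol{\Omega}}^*,\nu)$ ($\mathbf{U}_0\in\mathbb{R}^m$, $\mathbf{U}_1\in\mathbb{R}^d$) and $\mathbf{Z}$ has the conditional distribution of $\mathbf{U}_1$ given $\mathbf{U}_0+\boldsymbol{\tau}>\mathbf{0}$ (componentwise), then $\mathbf{Y}=\boldsymbol{\xi}+\boldsymbol{\omega}\mathbf{Z}$ has distribution $\mathcal{SUT}_{d,m}(\boldsymbol{\xi},\boldsymbol{\Omega},\boldsymbol{\Delta},\boldsymbol{\tau},\bar{\boldsymbol{\Gamma}},\nu)$.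 A canonical form of such a vector is one in which all the skewness is concentrated in the first component and the remaining components are symmetric. *)

theory Defs
  imports "HOL-Probability.Probability"
begin

text \<open>Matrices are type-indexed (HOL-Analysis). A matrix A :: real^'c^'r has rows
indexed by 'r and columns by 'c, entry A$i$j.\<close>

definition pos_def_mat :: "real^'k^'k \<Rightarrow> bool" where
  "pos_def_mat S \<longleftrightarrow> transpose S = S \<and> (\<forall>x. x \<noteq> 0 \<longrightarrow> x \<bullet> (S *v x) > 0)"

definition correlation_mat :: "real^'k^'k \<Rightarrow> bool" where
  "correlation_mat G \<longleftrightarrow> transpose G = G \<and> (\<forall>x. x \<bullet> (G *v x) \<ge> 0) \<and> (\<forall>i. G$i$i = 1)"

definition mvt_density :: "real^'k \<Rightarrow> real^'k^'k \<Rightarrow> real \<Rightarrow> real^'k \<Rightarrow> real" where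
  "mvt_density mu S nu x =
     (let k = real CARD('k) in
      Gamma ((nu + k) / 2) / (Gamma (nu / 2) * (nu * pi) powr (k / 2) * sqrt (det S))
      * (1 + ((x - mu) \<bullet> (matrix_inv S *v (x - mu))) / nu) powr (- (nu + k) / 2))"

definition mvt :: "real^'k \<Rightarrow> real^'k^'k \<Rightarrow> real \<Rightarrow> (real^'k) measure" where
  "mvt mu S nu = density lborel (\<lambda>x. ennreal (mvt_density mu S nu x))"

definition omega_vec :: "real^'d^'d \<Rightarrow> real^'d" where
  "omega_vec Om = (\<chi> i. sqrt (Om$i$i))"

definition Omega_bar :: "real^'d^'d \<Rightarrow> real^'d^'d" where
  "Omega_bar Om = (\<chi> i j. Om$i$j / (omega_vec Om $ i * omega_vec Om $ j))"

text \<open>The joint (m+d)x(m+d) matrix Omega-bar-star = [[Gamma, Delta^T],[Delta, Omega-bar]];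
the first block ('m) corresponds to U0, the second ('d) to U1.\<close>
definition Omega_star :: "real^'d^'d \<Rightarrow> real^'m^'d \<Rightarrow> real^'m^'m \<Rightarrow> real^('m + 'd)^('m + 'd)" where
  "Omega_star Om Dl G = (\<chi> a b. case (a, b) of
       (Inl i, Inl j) \<Rightarrow> G$i$j
     | (Inl i, Inr j) \<Rightarrow> Dl$j$i
     | (Inr i, Inl j) \<Rightarrow> Dl$i$j
     | (Inr i, Inr j) \<Rightarrow> Omega_bar Om $i$j)"

definition SUT_params :: "real^'d^'d \<Rightarrow> real^'m^'d \<Rightarrow> real^'m^'m \<Rightarrow> real \<Rightarrow> bool" where
  "SUT_params Om Dl G nu \<longleftrightarrow>
     pos_def_mat Om \<and> correlation_mat G \<and> pos_def_mat (Omega_star Om Dl G) \<and> nu > 0"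

text \<open>The SUT_{d,m}(xi, Omega, Delta, tau, Gamma-bar, nu) distribution on real^'d:
the law of Y = xi + omega Z, where Z has the conditional law of U1 given U0 + tau > 0,
(U0,U1) ~ T_{m+d}(0, Omega-bar-star, nu).\<close>
definition SUT :: "real^'d \<Rightarrow> real^'d^'d \<Rightarrow> real^'m^'d \<Rightarrow> real^'m \<Rightarrow> real^'m^'m \<Rightarrow> real
                   \<Rightarrow> (real^'d) measure" where
  "SUT xi Om Dl tau G nu =
     (let T = mvt 0 (Omega_star Om Dl G) nu;
          A = {u :: real^('m + 'd). \<forall>i. u $ Inl i + tau $ i > 0};
          C = density T (\<lambda>u. indicator A u / emeasure T A)
      in distr C borel (\<lambda>u. \<chi> j. xi $ j + omega_vec Om $ j * u $ Inr j))"

end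

theory Submission
  imports Defs
begin

(* Y = xi + omega Z, where Z is the latent block U1 of a multivariate t vector (U0, U1)
   conditioned on the selection event U0 + tau > 0.  Marginalising a block of Y amounts to
   marginalising the corresponding latent coordinates.  Completing the square (Schur complement)
   and rescaling the remaining integral show that the marginal of a centred t density over a block
   is, up to a constant factor, the t density of the corresponding sub-matrix; conditioning removes
   that factor.  Hence every sub-vector of Y is again unified skew-t with the sub-parameters; in
   particular Y1 is.  If Delta2 = 0, the latent dispersion matrix of (U0, U12) is block diagonal, so
   the t density is invariant under U12 -> -U12, a reflection that preserves the selection event;
   therefore Y2 - xi2 and its negative have the same law. *)

section \<open>Positive definite matrices\<close>

(* Keep transpose A *v x instead of rewriting it to x v* A, so that matrix identities apply. *)
declare transpose_matrix_vector [simp del]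

lemma inner_matrix_vector_transpose: "x \<bullet> ((M::real^'n^'m) *v y) = (transpose M *v x) \<bullet> y"
  by (simp add: dot_lmul_matrix[symmetric] transpose_matrix_vector)

lemma pos_def_mat_nonneg: "pos_def_mat S \<Longrightarrow> 0 \<le> x \<bullet> (S *v x)"
  unfolding pos_def_mat_def by (cases "x = 0") (auto intro: less_imp_le)

lemma pos_def_mat_invertible:
  fixes S :: "real^'n^'n"
  assumes "pos_def_mat S"
  shows "invertible S"
proof -
  have "S *v x = 0 \<Longrightarrow> x = 0" for x
    using assms unfolding pos_def_mat_def by force
  then show ?thesis
    using matrix_left_invertible_ker invertible_left_inverse by blast
qed

lemma matrix_inv_right: "invertible (A::real^'n^'n) \<Longrightarrow> A ** matrix_inv A = mat 1"
  and matrix_inv_left: "invertible (A::real^'n^'n) \<Longrightarrow> matrix_inv A ** A = mat 1"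
  using someI_ex[of "\<lambda>A'. A ** A' = mat 1 \<and> A' ** A = mat 1"]
  unfolding invertible_def matrix_inv_def by auto

lemma matrix_inv_unique:
  fixes A B :: "real^'n^'n"
  assumes "B ** A = mat 1"
  shows "matrix_inv A = B"
proof -
  have "invertible A" using assms invertible_left_inverse by blast
  have "matrix_inv A = (B ** A) ** matrix_inv A" by (simp add: assms matrix_mul_lid)
  also have "\<dots> = B" using matrix_inv_right[OF \<open>invertible A\<close>] by (simp add: matrix_mul_assoc[symmetric])
  finally show ?thesis .
qed

lemma matrix_inv_mult_cancel: "invertible (A::real^'n^'n) \<Longrightarrow> matrix_inv A *v (A *v x) = x"
  by (simp add: matrix_vector_mul_assoc matrix_inv_left)

lemma pos_def_mat_matrix_inv:
  fixes S :: "real^'n^'n"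
  assumes S: "pos_def_mat S"
  shows "pos_def_mat (matrix_inv S)"
  unfolding pos_def_mat_def
proof (intro conjI allI impI)
  have inv: "invertible S" by (rule pos_def_mat_invertible[OF S])
  have "transpose S = S" using S unfolding pos_def_mat_def by blast
  then have "transpose (matrix_inv S) ** S = mat 1"
    by (metis matrix_inv_right[OF inv] matrix_transpose_mul transpose_mat)
  from matrix_inv_unique[OF this] show "transpose (matrix_inv S) = matrix_inv S"
    by (rule sym)
  fix x :: "real^'n"
  assume "x \<noteq> 0"
  define y where "y = matrix_inv S *v x"
  have Sy: "S *v y = x"
    unfolding y_def by (simp add: matrix_vector_mul_assoc matrix_inv_right[OF inv])
  with \<open>x \<noteq> 0\<close> have "y \<noteq> 0" by auto
  then have "y \<bullet> (S *v y) > 0"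
    using S unfolding pos_def_mat_def by blast
  then show "x \<bullet> (matrix_inv S *v x) > 0"
    by (simp add: Sy y_def[symmetric] inner_commute)
qed

(* If det S <= 0, the segment from the identity to S meets a singular matrix,
   yet every matrix on that segment is positive definite. *)
lemma pos_def_mat_det_pos:
  fixes S :: "real^'n^'n"
  assumes S: "pos_def_mat S"
  shows "det S > 0"
proof (rule ccontr)
  assume "\<not> det S > 0"
  define path where "path t = (1 - t) *\<^sub>R mat 1 + t *\<^sub>R S" for t :: real
  have "continuous_on {0..1} (\<lambda>t. det (path t))"
    unfolding path_def det_def by (intro continuous_intros)
  moreover have "det (path 0) = 1" "det (path 1) \<le> 0"
    using \<open>\<not> det S > 0\<close> by (simp_all add: path_def)
  ultimately obtain t where t: "0 \<le> t" "t \<le> 1" "det (path t) = 0"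
    using IVT2'[of "\<lambda>t. det (path t)" 1 0 0] by auto
  then have "\<not> invertible (path t)" by (simp add: invertible_det_nz)
  then obtain x where x: "x \<noteq> 0" "path t *v x = 0"
    using matrix_left_invertible_ker invertible_left_inverse by blast
  have "path t *v x = (1 - t) *\<^sub>R x + t *\<^sub>R (S *v x)"
    by (simp add: path_def matrix_vector_mult_add_rdistrib scaleR_matrix_vector_assoc[symmetric])
  then have "x \<bullet> (path t *v x) = (1 - t) * (x \<bullet> x) + t * (x \<bullet> (S *v x))"
    by (simp add: inner_add_right)
  moreover have "x \<bullet> x > 0" "x \<bullet> (S *v x) > 0"
    using x S unfolding pos_def_mat_def by auto
  ultimately have "x \<bullet> (path t *v x) > 0"
    using t by (cases "t = 0") (auto intro!: add_pos_nonneg add_nonneg_pos)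
  then show False using x by simp
qed

lemma pos_def_mat_congruence:
  fixes S :: "real^'i^'i" and E :: "real^'j^'i"
  assumes S: "pos_def_mat S" and E: "transpose E ** E = mat 1"
  shows "pos_def_mat (transpose E ** S ** E)"
  unfolding pos_def_mat_def
proof (intro conjI allI impI)
  show "transpose (transpose E ** S ** E) = transpose E ** S ** E"
    using S unfolding pos_def_mat_def by (simp add: matrix_transpose_mul matrix_mul_assoc)
  fix x :: "real^'j"
  assume "x \<noteq> 0"
  moreover have "transpose E *v (E *v x) = x"
    by (simp add: matrix_vector_mul_assoc E)
  ultimately have "E *v x \<noteq> 0" by auto
  then have "(E *v x) \<bullet> (S *v (E *v x)) > 0"
    using S unfolding pos_def_mat_def by blast
  then show "x \<bullet> ((transpose E ** S ** E) *v x) > 0"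
    by (simp add: inner_matrix_vector_transpose matrix_vector_mul_assoc[symmetric])
qed

section \<open>Reindexing coordinates\<close>

definition vec_reindex :: "('c \<Rightarrow> 'd) \<Rightarrow> 'a^'d \<Rightarrow> 'a^'c" where
  "vec_reindex f x = (\<chi> c. x $ f c)"

definition mat_reindex :: "('c \<Rightarrow> 'd) \<Rightarrow> 'a^'d^'d \<Rightarrow> 'a^'c^'c" where
  "mat_reindex f M = (\<chi> a b. M $ f a $ f b)"

definition vec_split :: "('j::finite + 'k::finite \<Rightarrow> 'i) \<Rightarrow> real^'i \<Rightarrow> (real^'j) \<times> (real^'k)" where
  "vec_split \<sigma> x = (vec_reindex (\<sigma> \<circ> Inl) x, vec_reindex (\<sigma> \<circ> Inr) x)"

definition vec_join :: "('j::finite + 'k::finite \<Rightarrow> 'i) \<Rightarrow> (real^'j) \<times> (real^'k) \<Rightarrow> real^'i" where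
  "vec_join \<sigma> p = (\<chi> i. case inv \<sigma> i of Inl j \<Rightarrow> fst p $ j | Inr k \<Rightarrow> snd p $ k)"

lemma vec_reindex_nth [simp]: "vec_reindex f x $ c = x $ f c"
  by (simp add: vec_reindex_def)

lemma vec_join_nth:
  "bij \<sigma> \<Longrightarrow> vec_join \<sigma> p $ \<sigma> z = (case z of Inl j \<Rightarrow> fst p $ j | Inr k \<Rightarrow> snd p $ k)"
  by (simp add: vec_join_def bij_is_inj)

lemma vec_eq_iff_bij: "bij \<sigma> \<Longrightarrow> x = y \<longleftrightarrow> (\<forall>z. x $ \<sigma> z = y $ \<sigma> z)"
  unfolding vec_eq_iff by (metis bij_pointE)

lemma vec_join_split: "bij \<sigma> \<Longrightarrow> vec_join \<sigma> (vec_split \<sigma> x) = x"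
  by (auto simp: vec_eq_iff_bij vec_join_nth vec_split_def split: sum.split)

definition coord_mat :: "('a::finite \<Rightarrow> 'i::finite) \<Rightarrow> real^'a^'i" where
  "coord_mat f = (\<chi> i a. if i = f a then 1 else 0)"

lemma transpose_coord_mat_mult: "transpose (coord_mat f) *v y = vec_reindex f y"
  by (simp add: coord_mat_def transpose_def matrix_vector_mult_def vec_eq_iff
      if_distrib[of "\<lambda>t. t * _"] cong: if_cong)

lemma coord_mat_mult_apply:
  assumes "inj f"
  shows "(coord_mat f *v x) $ f a = x $ a"
proof -
  have "(coord_mat f *v x) $ f a = (\<Sum>b\<in>UNIV. (if a = b then 1 else 0) * x $ b)"
    using assms by (simp add: coord_mat_def matrix_vector_mult_def inj_eq)
  then show ?thesis by (simp add: if_distrib[of "\<lambda>t. t * _"] cong: if_cong)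
qed

lemma coord_mat_mult_outside: "i \<notin> range f \<Longrightarrow> (coord_mat f *v x) $ i = 0"
  by (auto simp: coord_mat_def matrix_vector_mult_def intro!: sum.neutral)

lemma coord_mat_orthonormal: "inj f \<Longrightarrow> transpose (coord_mat f) ** coord_mat f = mat 1"
  by (simp add: matrix_eq matrix_vector_mul_assoc[symmetric] transpose_coord_mat_mult
      coord_mat_mult_apply vec_eq_iff)

lemma coord_mat_orthogonal:
  "range f \<inter> range g = {} \<Longrightarrow> transpose (coord_mat g) ** coord_mat f = 0"
  by (auto simp: matrix_eq matrix_vector_mul_assoc[symmetric] transpose_coord_mat_mult vec_eq_iff
      intro!: coord_mat_mult_outside)

lemma coord_mat_decompose:
  fixes \<sigma> :: "'j::finite + 'k::finite \<Rightarrow> 'i::finite"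
  assumes "bij \<sigma>"
  shows "coord_mat (\<sigma> \<circ> Inl) *v a + coord_mat (\<sigma> \<circ> Inr) *v b = vec_join \<sigma> (a, b)"
proof -
  have inj: "inj (\<sigma> \<circ> Inl)" "inj (\<sigma> \<circ> Inr)" "inj \<sigma>"
    using assms by (auto simp: bij_def inj_def)
  have "(coord_mat (\<sigma> \<circ> Inl) *v a + coord_mat (\<sigma> \<circ> Inr) *v b) $ \<sigma> z
      = (case z of Inl j \<Rightarrow> a $ j | Inr k \<Rightarrow> b $ k)" for z
  proof -
    have "\<sigma> (Inl j) \<notin> range (\<sigma> \<circ> Inr)" "\<sigma> (Inr k) \<notin> range (\<sigma> \<circ> Inl)" for j k
      using inj(3) by (auto simp: inj_eq)
    then show ?thesis
      using coord_mat_mult_apply[OF inj(1)] coord_mat_mult_apply[OF inj(2)]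
      by (cases z) (auto simp: coord_mat_mult_outside)
  qed
  then show ?thesis
    by (simp add: vec_eq_iff_bij[OF assms] vec_join_nth[OF assms] split: sum.split)
qed

lemma coord_mat_complementary:
  fixes \<sigma> :: "'j::finite + 'k::finite \<Rightarrow> 'i::finite"
  assumes "bij \<sigma>"
  shows "coord_mat (\<sigma> \<circ> Inl) ** transpose (coord_mat (\<sigma> \<circ> Inl))
       + coord_mat (\<sigma> \<circ> Inr) ** transpose (coord_mat (\<sigma> \<circ> Inr)) = mat 1"
proof -
  have "coord_mat (\<sigma> \<circ> Inl) *v vec_reindex (\<sigma> \<circ> Inl) y
      + coord_mat (\<sigma> \<circ> Inr) *v vec_reindex (\<sigma> \<circ> Inr) y = y" for y :: "real^'i"
    using vec_join_split[OF assms, of y] by (simp add: coord_mat_decompose[OF assms] vec_split_def)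
  then show ?thesis
    by (simp add: matrix_eq matrix_vector_mult_add_rdistrib matrix_vector_mul_assoc[symmetric]
        transpose_coord_mat_mult)
qed

lemma coord_mat_congruence: "transpose (coord_mat f) ** S ** coord_mat f = mat_reindex f S"
  by (simp add: matrix_matrix_mult_def transpose_def coord_mat_def mat_reindex_def vec_eq_iff
      if_distrib[of "\<lambda>t. t * _"] if_distrib[of "\<lambda>t. _ * t"] cong: if_cong)

lemma pos_def_mat_reindex: "pos_def_mat S \<Longrightarrow> inj f \<Longrightarrow> pos_def_mat (mat_reindex f S)"
  using pos_def_mat_congruence[OF _ coord_mat_orthonormal] by (simp add: coord_mat_congruence)

section \<open>Lebesgue measure under coordinate changes\<close>

lemma vec_nth_measurable [measurable]: "(\<lambda>x::real^'n. x $ i) \<in> borel_measurable borel"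
  by (intro borel_measurable_continuous_onI continuous_intros)

lemma vec_lambda_measurable:
  assumes "\<And>i. f i \<in> borel_measurable M"
  shows "(\<lambda>x. \<chi> i. f i x :: real^'n) \<in> borel_measurable M"
  by (subst borel_measurable_euclidean_space) (auto simp: Basis_vec_def inner_axis assms)

lemma vec_reindex_measurable [measurable]:
  "vec_reindex f \<in> (borel_measurable borel :: (real^'d \<Rightarrow> real^'c) set)"
  unfolding vec_reindex_def by (intro vec_lambda_measurable) measurable

lemma matrix_vector_mult_measurable [measurable (raw)]:
  "f \<in> borel_measurable N \<Longrightarrow> (\<lambda>x. (M::real^'n^'m) *v f x) \<in> borel_measurable N"
  by (rule measurable_compose[OF _ borel_measurable_continuous_onI])
    (auto simp: matrix_vector_mult_def intro!: continuous_intros)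

lemma vec_split_measurable [measurable]: "vec_split \<sigma> \<in> borel_measurable borel"
  unfolding vec_split_def borel_prod[symmetric] by measurable

lemma vec_join_measurable [measurable]: "vec_join \<sigma> \<in> borel_measurable borel"
  unfolding vec_join_def
proof (intro vec_lambda_measurable)
  fix i
  show "(\<lambda>p. case inv \<sigma> i of Inl j \<Rightarrow> fst p $ j | Inr k \<Rightarrow> snd p $ k) \<in> borel_measurable borel"
    by (cases "inv \<sigma> i") (auto intro!: borel_measurable_continuous_onI continuous_intros)
qed

lemma all_surj_iff: "surj f \<Longrightarrow> (\<forall>y. P y) \<longleftrightarrow> (\<forall>x. P (f x))"
  by (metis surjD)

lemma emeasure_lborel_box_cart:
  fixes l u :: "real^'n"
  assumes "\<And>i. l $ i \<le> u $ i"
  shows "emeasure lborel (box l u) = (\<Prod>i\<in>UNIV. u $ i - l $ i)"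
proof -
  have "(\<Prod>b\<in>Basis. (u - l) \<bullet> b) = (\<Prod>i\<in>UNIV. u $ i - l $ i)"
    by (simp add: Basis_vec_def cart_eq_inner_axis axis_eq_axis prod.UNION_disjoint inner_diff_left)
  then show ?thesis
    using assms by (subst emeasure_lborel_box) (auto simp: Basis_vec_def inner_axis)
qed

lemma vimage_vec_split_box:
  fixes \<sigma> :: "'j::finite + 'k::finite \<Rightarrow> 'i::finite"
    and la ua :: "real^'j" and lb ub :: "real^'k"
  assumes "bij \<sigma>"
  shows "vec_split \<sigma> -` (box la ua \<times> box lb ub)
       = box (vec_join \<sigma> (la, lb)) (vec_join \<sigma> (ua, ub))"
proof -
  have "x \<in> box l u \<longleftrightarrow> (\<forall>z. l $ \<sigma> z < x $ \<sigma> z \<and> x $ \<sigma> z < u $ \<sigma> z)"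
    for x l u :: "real^'i"
    unfolding mem_box_cart by (rule all_surj_iff[OF bij_is_surj[OF assms]])
  then show ?thesis
    by (simp add: set_eq_iff split_sum_all vec_split_def mem_box_cart vec_join_nth[OF assms])
qed

lemma lborel_distr_vec_split:
  fixes \<sigma> :: "'j::finite + 'k::finite \<Rightarrow> 'i::finite"
  assumes "bij \<sigma>"
  shows "distr lborel borel (vec_split \<sigma>) = lborel"
proof (rule lborel_eqI[symmetric], clarify)
  fix la :: "real^'j" and lb :: "real^'k" and ua :: "real^'j" and ub :: "real^'k"
  assume le: "\<And>a b. (a, b) \<in> Basis \<Longrightarrow> (la, lb) \<bullet> (a, b) \<le> (ua, ub) \<bullet> (a, b)"
  define L U where "L = vec_join \<sigma> (la, lb)" and "U = vec_join \<sigma> (ua, ub)"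
  have le_a: "la $ j \<le> ua $ j" for j
    using le[of "axis j 1" 0] by (simp add: Basis_prod_def inner_axis)
  have le_b: "lb $ k \<le> ub $ k" for k
    using le[of 0 "axis k 1"] by (simp add: Basis_prod_def inner_axis)
  have "L $ \<sigma> z \<le> U $ \<sigma> z" for z
    using le_a le_b by (cases z) (simp_all add: L_def U_def vec_join_nth[OF assms])
  then have LU: "L $ i \<le> U $ i" for i
    by (metis assms bij_pointE)
  have box_eq: "box (la, lb) (ua, ub) = box la ua \<times> box lb ub"
    by (auto simp: box_def Basis_prod_def ball_Un)
  have "ennreal (\<Prod>b\<in>Basis. ((ua, ub) - (la, lb)) \<bullet> b) = emeasure lborel (box (la, lb) (ua, ub))"
    by (rule emeasure_lborel_box[symmetric]) (metis le prod.collapse)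
  also have "\<dots> = emeasure lborel (box la ua) * emeasure lborel (box lb ub)"
    by (simp add: box_eq lborel_prod[symmetric] lborel.emeasure_pair_measure_Times)
  also have "\<dots> = ennreal ((\<Prod>j\<in>UNIV. ua $ j - la $ j) * (\<Prod>k\<in>UNIV. ub $ k - lb $ k))"
    using le_a le_b by (simp add: emeasure_lborel_box_cart ennreal_mult' prod_nonneg)
  also have "\<dots> = ennreal (\<Prod>z\<in>UNIV. U $ \<sigma> z - L $ \<sigma> z)"
    by (subst UNIV_Plus_UNIV[symmetric], subst prod.Plus)
      (simp_all add: L_def U_def vec_join_nth[OF assms] o_def)
  also have "\<dots> = ennreal (\<Prod>i\<in>UNIV. U $ i - L $ i)"
    using prod.reindex_bij_betw[of \<sigma> UNIV UNIV "\<lambda>i. U $ i - L $ i"] assms by simp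
  also have "\<dots> = emeasure lborel (vec_split \<sigma> -` box (la, lb) (ua, ub))"
    using LU by (simp add: L_def U_def box_eq vimage_vec_split_box[OF assms] emeasure_lborel_box_cart)
  finally show "emeasure (distr lborel borel (vec_split \<sigma>)) (box (la, lb) (ua, ub))
      = ennreal (\<Prod>b\<in>Basis. ((ua, ub) - (la, lb)) \<bullet> b)"
    by (simp add: emeasure_distr)
qed simp

lemma distr_fst_density_pair_measure:
  assumes "sigma_finite_measure N" and g [measurable]: "g \<in> borel_measurable (M \<Otimes>\<^sub>M N)"
  shows "distr (density (M \<Otimes>\<^sub>M N) g) M fst = density M (\<lambda>x. \<integral>\<^sup>+y. g (x, y) \<partial>N)"
proof (rule measure_eqI)
  interpret N: sigma_finite_measure N by fact
  fix A assume "A \<in> sets (distr (density (M \<Otimes>\<^sub>M N) g) M fst)"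
  then have A [measurable]: "A \<in> sets M" by simp
  have "fst -` A \<inter> space (M \<Otimes>\<^sub>M N) = A \<times> space N"
    using sets.sets_into_space[OF A] by (auto simp: space_pair_measure)
  then have "emeasure (distr (density (M \<Otimes>\<^sub>M N) g) M fst) A
      = emeasure (density (M \<Otimes>\<^sub>M N) g) (A \<times> space N)"
    by (simp add: emeasure_distr)
  also have "\<dots> = (\<integral>\<^sup>+x. \<integral>\<^sup>+y. g (x, y) * indicator (A \<times> space N) (x, y) \<partial>N \<partial>M)"
    by (simp add: emeasure_density N.nn_integral_fst[symmetric])
  also have "\<dots> = (\<integral>\<^sup>+x. (\<integral>\<^sup>+y. g (x, y) \<partial>N) * indicator A x \<partial>M)"
    by (intro nn_integral_cong)
      (auto simp: nn_integral_multc[symmetric] indicator_def intro!: nn_integral_cong)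
  also have "\<dots> = emeasure (density M (\<lambda>x. \<integral>\<^sup>+y. g (x, y) \<partial>N)) A"
    by (simp add: emeasure_density N.borel_measurable_nn_integral_fst)
  finally show "emeasure (distr (density (M \<Otimes>\<^sub>M N) g) M fst) A
      = emeasure (density M (\<lambda>x. \<integral>\<^sup>+y. g (x, y) \<partial>N)) A" .
qed simp

lemma distr_vec_reindex_Inl_density:
  fixes \<sigma> :: "'j::finite + 'k::finite \<Rightarrow> 'i::finite"
    and g :: "real^'i \<Rightarrow> ennreal"
  assumes "bij \<sigma>" and [measurable]: "g \<in> borel_measurable borel"
  shows "distr (density lborel g) borel (vec_reindex (\<sigma> \<circ> Inl))
       = density lborel (\<lambda>a. \<integral>\<^sup>+b. g (vec_join \<sigma> (a, b)) \<partial>lborel)"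
proof -
  have "density (distr lborel borel (vec_split \<sigma>)) (\<lambda>p. g (vec_join \<sigma> p))
      = distr (density lborel (\<lambda>x. g (vec_join \<sigma> (vec_split \<sigma> x)))) borel (vec_split \<sigma>)"
    by (rule density_distr) measurable
  then have "distr (density lborel g) borel (vec_split \<sigma>) = density lborel (\<lambda>p. g (vec_join \<sigma> p))"
    by (simp add: lborel_distr_vec_split[OF assms(1)] vec_join_split[OF assms(1)])
  moreover have "vec_reindex (\<sigma> \<circ> Inl) = fst \<circ> vec_split \<sigma>"
    by (simp add: fun_eq_iff vec_split_def)
  moreover have "distr (density lborel g) borel (fst \<circ> vec_split \<sigma>)
      = distr (distr (density lborel g) borel (vec_split \<sigma>)) borel fst"
  proof (rule distr_distr[symmetric])
    show "fst \<in> borel_measurable (borel :: ((real^'j) \<times> (real^'k)) measure)"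
      by (intro borel_measurable_continuous_onI continuous_intros)
  qed simp
  ultimately have "distr (density lborel g) borel (vec_reindex (\<sigma> \<circ> Inl))
      = distr (density lborel (\<lambda>p. g (vec_join \<sigma> p))) borel fst"
    by (simp only:)
  also have "\<dots> = distr (density (lborel \<Otimes>\<^sub>M lborel) (\<lambda>p. g (vec_join \<sigma> p))) lborel fst"
    by (rule distr_cong) (simp_all add: lborel_prod)
  also have "\<dots> = density lborel (\<lambda>a. \<integral>\<^sup>+b. g (vec_join \<sigma> (a, b)) \<partial>lborel)"
    by (rule distr_fst_density_pair_measure) (simp_all add: lborel_prod lborel.sigma_finite_measure_axioms)
  finally show ?thesis .
qed

lemma nn_integral_lborel_translate:
  fixes f :: "'a::euclidean_space \<Rightarrow> ennreal"
  assumes "f \<in> borel_measurable borel"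
  shows "(\<integral>\<^sup>+x. f (x + d) \<partial>lborel) = (\<integral>\<^sup>+x. f x \<partial>lborel)"
proof -
  have "(\<integral>\<^sup>+x. f (x + d) \<partial>lborel) = (\<integral>\<^sup>+x. f x \<partial>distr lborel borel ((+) d))"
    using assms by (simp add: nn_integral_distr add.commute)
  then show ?thesis by (simp add: lborel_distr_plus)
qed

lemma nn_integral_lborel_scale:
  fixes f :: "'a::euclidean_space \<Rightarrow> ennreal"
  assumes [measurable]: "f \<in> borel_measurable borel" and "c > 0"
  shows "(\<integral>\<^sup>+x. f x \<partial>lborel) = ennreal (c ^ DIM('a)) * (\<integral>\<^sup>+x. f (c *\<^sub>R x) \<partial>lborel)"
proof -
  have "c \<noteq> 0" using \<open>c > 0\<close> by simp
  have "(\<integral>\<^sup>+x. f x \<partial>lborel)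
      = (\<integral>\<^sup>+x. f x \<partial>density (distr lborel borel (\<lambda>x. 0 + c *\<^sub>R x)) (\<lambda>_. ennreal (\<bar>c\<bar> ^ DIM('a))))"
    by (rule arg_cong[OF lborel_affine[OF \<open>c \<noteq> 0\<close>, where t = "0::'a"]])
  also have "\<dots> = (\<integral>\<^sup>+x. ennreal (c ^ DIM('a)) * f (c *\<^sub>R x) \<partial>lborel)"
    using \<open>c > 0\<close> by (simp add: nn_integral_density nn_integral_distr)
  finally show ?thesis by (simp add: nn_integral_cmult)
qed

section \<open>Marginals of the multivariate t distribution\<close>

lemma quadratic_form_add_orthogonal:
  fixes P :: "real^'i^'i" and E :: "real^'k^'i"
  assumes P: "transpose P = P" and orth: "transpose E *v (P *v v) = 0"
  shows "(v + E *v c) \<bullet> (P *v (v + E *v c)) = v \<bullet> (P *v v) + c \<bullet> ((transpose E ** P ** E) *v c)"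
proof -
  have cross: "(E *v c) \<bullet> (P *v v) = 0"
    by (metis inner_commute inner_matrix_vector_transpose inner_zero_left orth)
  have "v \<bullet> (P *v (E *v c)) = (E *v c) \<bullet> (P *v v)"
    by (metis P inner_commute inner_matrix_vector_transpose)
  moreover have "(E *v c) \<bullet> (P *v (E *v c)) = c \<bullet> ((transpose E ** P ** E) *v c)"
    by (simp add: inner_matrix_vector_transpose matrix_vector_mul_assoc[symmetric])
  ultimately show ?thesis
    using cross by (simp add: matrix_vector_right_distrib inner_add_left inner_add_right)
qed

lemma quadratic_form_inverse_restrict:
  fixes S :: "real^'i^'i" and EJ :: "real^'j^'i" and EK :: "real^'k^'i"
  assumes S: "pos_def_mat S" and JJ: "transpose EJ ** EJ = mat 1"
    and decomp: "EJ ** transpose EJ + EK ** transpose EK = mat 1"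
    and orth: "transpose EK *v (matrix_inv S *v v) = 0"
  shows "v \<bullet> (matrix_inv S *v v)
       = (transpose EJ *v v) \<bullet> (matrix_inv (transpose EJ ** S ** EJ) *v (transpose EJ *v v))"
proof -
  define S1 where "S1 = transpose EJ ** S ** EJ"
  define w where "w = transpose EJ *v (matrix_inv S *v v)"
  have "matrix_inv S *v v = (EJ ** transpose EJ + EK ** transpose EK) *v (matrix_inv S *v v)"
    by (simp add: decomp)
  also have "\<dots> = EJ *v w"
    by (simp add: matrix_vector_mult_add_rdistrib matrix_vector_mul_assoc[symmetric] orth w_def)
  finally have Pv: "matrix_inv S *v v = EJ *v w" .
  have "v = S *v (EJ *v w)"
    using matrix_inv_right[OF pos_def_mat_invertible[OF S]]
    by (metis Pv matrix_vector_mul_assoc matrix_vector_mul_lid)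
  then have "transpose EJ *v v = S1 *v w"
    by (simp add: S1_def matrix_vector_mul_assoc matrix_mul_assoc)
  moreover have "invertible S1"
    unfolding S1_def by (intro pos_def_mat_invertible pos_def_mat_congruence S JJ)
  ultimately have "w = matrix_inv S1 *v (transpose EJ *v v)"
    by (simp add: matrix_inv_mult_cancel)
  then show ?thesis
    by (simp add: Pv inner_matrix_vector_transpose S1_def)
qed

(* Completing the square in b (Schur complement). *)
lemma quadratic_form_inverse_schur:
  fixes S :: "real^'i^'i" and EJ :: "real^'j^'i" and EK :: "real^'k^'i"
  assumes S: "pos_def_mat S"
    and JJ: "transpose EJ ** EJ = mat 1" and KK: "transpose EK ** EK = mat 1"
    and JK: "transpose EJ ** EK = 0"
    and decomp: "EJ ** transpose EJ + EK ** transpose EK = mat 1"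
  defines "W \<equiv> transpose EK ** matrix_inv S ** EK"
  defines "B \<equiv> matrix_inv W ** (transpose EK ** matrix_inv S ** EJ)"
  shows "(EJ *v a + EK *v b) \<bullet> (matrix_inv S *v (EJ *v a + EK *v b))
       = a \<bullet> (matrix_inv (transpose EJ ** S ** EJ) *v a) + (b + B *v a) \<bullet> (W *v (b + B *v a))"
proof -
  define x where "x = EJ *v a + EK *v b"
  define c where "c = b + B *v a"
  define v where "v = x - EK *v c"
  have P: "pos_def_mat (matrix_inv S)" by (rule pos_def_mat_matrix_inv[OF S])
  have "invertible W"
    unfolding W_def by (intro pos_def_mat_invertible pos_def_mat_congruence P KK)
  then have "W *v c = transpose EK *v (matrix_inv S *v x)"
    by (simp add: c_def B_def x_def W_def matrix_inv_right matrix_vector_right_distrib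
        matrix_vector_mul_assoc matrix_mul_assoc)
  then have orth: "transpose EK *v (matrix_inv S *v v) = 0"
    by (simp add: v_def W_def matrix_vector_mult_diff_distrib matrix_vector_mul_assoc matrix_mul_assoc)
  have a: "transpose EJ *v v = a"
    by (simp add: v_def x_def matrix_vector_mult_diff_distrib matrix_vector_right_distrib
        matrix_vector_mul_assoc JJ JK)
  have "x = v + EK *v c" by (simp add: v_def)
  then have "x \<bullet> (matrix_inv S *v x) = v \<bullet> (matrix_inv S *v v) + c \<bullet> (W *v c)"
    using P orth unfolding pos_def_mat_def W_def by (simp add: quadratic_form_add_orthogonal)
  then show ?thesis
    using quadratic_form_inverse_restrict[OF S JJ decomp orth] by (simp add: a x_def c_def)
qed

lemma quadratic_form_inverse_vec_join:
  fixes \<sigma> :: "'j::finite + 'k::finite \<Rightarrow> 'i::finite" and S :: "real^'i^'i"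
  assumes \<sigma>: "bij \<sigma>" and S: "pos_def_mat S"
  obtains W :: "real^'k^'k" and B :: "real^'j^'k"
  where "pos_def_mat W"
    and "\<And>a b. vec_join \<sigma> (a, b) \<bullet> (matrix_inv S *v vec_join \<sigma> (a, b))
           = a \<bullet> (matrix_inv (mat_reindex (\<sigma> \<circ> Inl) S) *v a) + (b + B *v a) \<bullet> (W *v (b + B *v a))"
proof -
  define EJ EK where "EJ = coord_mat (\<sigma> \<circ> Inl)" and "EK = coord_mat (\<sigma> \<circ> Inr)"
  have inj: "inj (\<sigma> \<circ> Inl)" "inj (\<sigma> \<circ> Inr)"
    using \<sigma> by (auto simp: bij_def inj_def)
  have disj: "range (\<sigma> \<circ> Inl) \<inter> range (\<sigma> \<circ> Inr) = {}"
    using \<sigma> by (auto simp: bij_def inj_eq)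
  have JJ: "transpose EJ ** EJ = mat 1" and KK: "transpose EK ** EK = mat 1"
    unfolding EJ_def EK_def by (simp_all add: coord_mat_orthonormal inj)
  have JK: "transpose EJ ** EK = 0"
    unfolding EJ_def EK_def by (rule coord_mat_orthogonal) (use disj in blast)
  have decomp: "EJ ** transpose EJ + EK ** transpose EK = mat 1"
    unfolding EJ_def EK_def by (rule coord_mat_complementary[OF \<sigma>])
  define W where "W = transpose EK ** matrix_inv S ** EK"
  define B where "B = matrix_inv W ** (transpose EK ** matrix_inv S ** EJ)"
  show thesis
  proof (rule that[of W B])
    show "pos_def_mat W"
      unfolding W_def by (intro pos_def_mat_congruence pos_def_mat_matrix_inv S KK)
    show "vec_join \<sigma> (a, b) \<bullet> (matrix_inv S *v vec_join \<sigma> (a, b))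
        = a \<bullet> (matrix_inv (mat_reindex (\<sigma> \<circ> Inl) S) *v a) + (b + B *v a) \<bullet> (W *v (b + B *v a))"
      for a b
      using quadratic_form_inverse_schur[OF S JJ KK JK decomp, of a b]
      by (simp add: W_def B_def EJ_def EK_def coord_mat_decompose[OF \<sigma>] coord_mat_congruence)
  qed
qed

lemma power_mult_powr_square:
  fixes s :: real
  assumes "s > 0"
  shows "s ^ n * (s\<^sup>2) powr - a = (s\<^sup>2) powr (real n / 2 - a)"
proof -
  have "(s\<^sup>2) powr (real n / 2) = (s powr 2) powr (real n / 2)"
    using assms by (simp add: powr_realpow)
  also have "\<dots> = s ^ n"
    using assms by (subst powr_powr) (simp add: powr_realpow)
  moreover have "(s\<^sup>2) powr (real n / 2 - a) = (s\<^sup>2) powr (real n / 2) * (s\<^sup>2) powr - a"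
    by (metis diff_conv_add_uminus powr_add)
  ultimately show ?thesis
    by simp
qed

lemma nn_integral_t_kernel_shift_scale:
  fixes W :: "real^'k^'k"
  assumes W: "\<And>w. 0 \<le> w \<bullet> (W *v w)" and nu: "nu > 0" and q: "q \<ge> 0"
  shows "(\<integral>\<^sup>+b. ennreal ((1 + (q + (b + d) \<bullet> (W *v (b + d))) / nu) powr - p) \<partial>lborel)
       = ennreal (((nu + q) / nu) powr (real CARD('k) / 2 - p))
         * (\<integral>\<^sup>+w. ennreal ((1 + (w \<bullet> (W *v w)) / nu) powr - p) \<partial>lborel)"
proof -
  define F where "F b = ennreal ((1 + (q + b \<bullet> (W *v b)) / nu) powr - p)" for b :: "real^'k"
  define s where "s = sqrt ((nu + q) / nu)"
  have s: "s > 0" "s\<^sup>2 = (nu + q) / nu"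
    using nu q by (simp_all add: s_def)
  have F_scale: "F (s *\<^sub>R w) = ennreal ((s\<^sup>2) powr - p) * ennreal ((1 + (w \<bullet> (W *v w)) / nu) powr - p)" for w
  proof -
    have "(s *\<^sub>R w) \<bullet> (W *v (s *\<^sub>R w)) = s\<^sup>2 * (w \<bullet> (W *v w))"
      by (simp add: matrix_vector_mult_scaleR power2_eq_square)
    then have "1 + (q + (s *\<^sub>R w) \<bullet> (W *v (s *\<^sub>R w))) / nu = s\<^sup>2 * (1 + (w \<bullet> (W *v w)) / nu)"
      using nu by (simp add: s(2) field_simps)
    moreover have "0 \<le> 1 + (w \<bullet> (W *v w)) / nu"
      using W[of w] nu by simp
    ultimately show ?thesis
      by (simp add: F_def powr_mult ennreal_mult del: s(2))
  qed
  have exponent: "s ^ CARD('k) * (s\<^sup>2) powr - p = ((nu + q) / nu) powr (real CARD('k) / 2 - p)"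
    using power_mult_powr_square[OF s(1), of "CARD('k)" p] by (simp add: s(2))
  have [measurable]: "F \<in> borel_measurable borel"
    unfolding F_def by measurable
  have "(\<integral>\<^sup>+b. ennreal ((1 + (q + (b + d) \<bullet> (W *v (b + d))) / nu) powr - p) \<partial>lborel)
      = (\<integral>\<^sup>+b. F (b + d) \<partial>lborel)"
    by (simp add: F_def)
  also have "\<dots> = (\<integral>\<^sup>+b. F b \<partial>lborel)"
    by (rule nn_integral_lborel_translate) measurable
  also have "\<dots> = ennreal (s ^ CARD('k)) * (\<integral>\<^sup>+w. F (s *\<^sub>R w) \<partial>lborel)"
    using s(1) by (subst nn_integral_lborel_scale) simp_all
  also have "\<dots> = ennreal (s ^ CARD('k)) * ennreal ((s\<^sup>2) powr - p)
      * (\<integral>\<^sup>+w. ennreal ((1 + (w \<bullet> (W *v w)) / nu) powr - p) \<partial>lborel)"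
    by (simp add: F_scale nn_integral_cmult mult.assoc)
  finally show ?thesis
    using s(1) by (simp add: exponent ennreal_mult[symmetric])
qed

definition mvt_const :: "real^'k^'k \<Rightarrow> real \<Rightarrow> real" where
  "mvt_const S nu = Gamma ((nu + real CARD('k)) / 2)
     / (Gamma (nu / 2) * (nu * pi) powr (real CARD('k) / 2) * sqrt (det S))"

lemma mvt_density_zero:
  "mvt_density 0 S nu x
     = mvt_const S nu * (1 + (x \<bullet> (matrix_inv S *v x)) / nu) powr - ((nu + CARD('k)) / 2)"
  for S :: "real^'k^'k"
  unfolding mvt_density_def mvt_const_def Let_def by (simp add: minus_divide_left)

lemma mvt_const_pos: "pos_def_mat S \<Longrightarrow> nu > 0 \<Longrightarrow> mvt_const S nu > 0"
  by (simp add: mvt_const_def pos_def_mat_det_pos Gamma_real_pos)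

lemma mvt_density_measurable [measurable]: "mvt_density mu S nu \<in> borel_measurable borel"
  unfolding mvt_density_def Let_def by measurable

lemma sets_mvt [simp, measurable_cong]: "sets (mvt mu S nu) = sets borel"
  by (simp add: mvt_def)

lemma nn_integral_mvt_density_vec_join:
  fixes \<sigma> :: "'j::finite + 'k::finite \<Rightarrow> 'i::finite" and S :: "real^'i^'i"
  assumes \<sigma>: "bij \<sigma>" and S: "pos_def_mat S" and nu: "nu > 0"
  obtains \<kappa> :: ennreal where "\<And>a. (\<integral>\<^sup>+b. mvt_density 0 S nu (vec_join \<sigma> (a, b)) \<partial>lborel)
                    = \<kappa> * mvt_density 0 (mat_reindex (\<sigma> \<circ> Inl) S) nu a"
proof -
  obtain W :: "real^'k^'k" and B where W: "pos_def_mat W" and quad: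
    "\<And>a b. vec_join \<sigma> (a, b) \<bullet> (matrix_inv S *v vec_join \<sigma> (a, b))
      = a \<bullet> (matrix_inv (mat_reindex (\<sigma> \<circ> Inl) S) *v a) + (b + B *v a) \<bullet> (W *v (b + B *v a))"
    using quadratic_form_inverse_vec_join[OF \<sigma> S] by blast
  define S1 where "S1 = mat_reindex (\<sigma> \<circ> Inl) S"
  define p where "p = (nu + CARD('i)) / 2"
  define K where "K = (\<integral>\<^sup>+w. ennreal ((1 + (w \<bullet> (W *v w)) / nu) powr - p) \<partial>lborel)"
  have S1: "pos_def_mat S1"
    unfolding S1_def using \<sigma> by (intro pos_def_mat_reindex S) (auto simp: bij_def inj_def)
  have "CARD('j + 'k) = CARD('i)"
    using bij_betw_same_card[of \<sigma> UNIV UNIV] \<sigma> by (simp add: bij_def)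
  then have exponent: "real CARD('k) / 2 - p = - ((nu + CARD('j)) / 2)"
    by (simp add: p_def card_UNIV_sum field_simps)
  have c: "mvt_const S nu > 0" "mvt_const S1 nu > 0"
    using S S1 nu by (simp_all add: mvt_const_pos)
  have "(\<integral>\<^sup>+b. mvt_density 0 S nu (vec_join \<sigma> (a, b)) \<partial>lborel)
      = ennreal (mvt_const S nu / mvt_const S1 nu) * K * mvt_density 0 S1 nu a" for a
  proof -
    define q where "q = a \<bullet> (matrix_inv S1 *v a)"
    have q: "q \<ge> 0"
      unfolding q_def by (rule pos_def_mat_nonneg[OF pos_def_mat_matrix_inv[OF S1]])
    have "(\<integral>\<^sup>+b. mvt_density 0 S nu (vec_join \<sigma> (a, b)) \<partial>lborel)
        = (\<integral>\<^sup>+b. ennreal (mvt_const S nu)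
             * ennreal ((1 + (q + (b + B *v a) \<bullet> (W *v (b + B *v a))) / nu) powr - p) \<partial>lborel)"
      using c by (simp add: mvt_density_zero quad q_def S1_def p_def ennreal_mult)
    also have "\<dots> = ennreal (mvt_const S nu) * ennreal (((nu + q) / nu) powr (real CARD('k) / 2 - p)) * K"
      using pos_def_mat_nonneg[OF W] nu q
      by (simp add: nn_integral_cmult nn_integral_t_kernel_shift_scale K_def mult.assoc)
    also have "\<dots> = ennreal (mvt_const S nu / mvt_const S1 nu) * K * mvt_density 0 S1 nu a"
      using c nu by (simp add: exponent mvt_density_zero q_def add_divide_distrib ennreal_mult[symmetric]
          mult_ac)
    finally show ?thesis .
  qed
  then show thesis
    unfolding S1_def by (rule that)
qed

(* The factor is in fact 1, but it never has to be computed: conditioning renormalises. *)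
lemma distr_mvt_vec_reindex_Inl:
  fixes \<sigma> :: "'j::finite + 'k::finite \<Rightarrow> 'i::finite" and S :: "real^'i^'i"
  assumes \<sigma>: "bij \<sigma>" and S: "pos_def_mat S" and nu: "nu > 0"
  obtains \<kappa> :: ennreal where "distr (mvt 0 S nu) borel (vec_reindex (\<sigma> \<circ> Inl))
                    = density (mvt 0 (mat_reindex (\<sigma> \<circ> Inl) S) nu) (\<lambda>_. \<kappa>)"
proof -
  obtain \<kappa> :: ennreal where \<kappa>: "\<And>a. (\<integral>\<^sup>+b. mvt_density 0 S nu (vec_join \<sigma> (a, b)) \<partial>lborel)
                          = \<kappa> * mvt_density 0 (mat_reindex (\<sigma> \<circ> Inl) S) nu a"
    using nn_integral_mvt_density_vec_join[OF assms] by blast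
  have "distr (mvt 0 S nu) borel (vec_reindex (\<sigma> \<circ> Inl))
      = density lborel (\<lambda>a. \<integral>\<^sup>+b. mvt_density 0 S nu (vec_join \<sigma> (a, b)) \<partial>lborel)"
    unfolding mvt_def by (rule distr_vec_reindex_Inl_density[OF \<sigma>]) measurable
  also have "\<dots> = density (mvt 0 (mat_reindex (\<sigma> \<circ> Inl) S) nu) (\<lambda>_. \<kappa>)"
    unfolding mvt_def \<kappa> by (subst density_density_eq) (simp_all add: mult.commute)
  finally show thesis by (rule that)
qed

section \<open>Conditioning\<close>

(* Meaningful only when 0 < T A < \<infinity>; otherwise the density is a junk value. *)
definition conditional_measure :: "'a measure \<Rightarrow> 'a set \<Rightarrow> 'a measure" where
  "conditional_measure T A = density T (\<lambda>u. indicator A u / emeasure T A)"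

lemma emeasure_conditional_measure_space:
  assumes "A \<in> sets T"
  shows "emeasure (conditional_measure T A) (space T) = emeasure T A / emeasure T A"
proof -
  have "emeasure (conditional_measure T A) (space T) = (\<integral>\<^sup>+u. indicator A u * inverse (emeasure T A) \<partial>T)"
    using assms by (simp add: conditional_measure_def emeasure_density divide_ennreal_def)
  also have "\<dots> = emeasure T A * inverse (emeasure T A)"
    using assms by (simp add: nn_integral_multc)
  finally show ?thesis by (simp add: divide_ennreal_def)
qed

lemma distr_conditional_measure_vimage:
  fixes \<pi> :: "'a::topological_space \<Rightarrow> 'b::topological_space"
  assumes sets: "sets T = sets borel" "sets T1 = sets borel"
    and \<pi> [measurable]: "\<pi> \<in> borel_measurable borel"
    and marginal: "distr T borel \<pi> = density T1 (\<lambda>_. \<kappa>)"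
    and A1 [measurable]: "A1 \<in> sets borel"
    and nondeg: "emeasure T (\<pi> -` A1) \<noteq> 0" "emeasure T (\<pi> -` A1) \<noteq> \<top>"
  shows "distr (conditional_measure T (\<pi> -` A1)) borel \<pi> = conditional_measure T1 A1"
proof -
  have \<pi>T: "\<pi> \<in> T \<rightarrow>\<^sub>M borel" using sets(1) by simp
  have "emeasure T (\<pi> -` A1) = emeasure (distr T borel \<pi>) A1"
    using sets_eq_imp_space_eq[OF sets(1)] by (simp add: emeasure_distr[OF \<pi>T])
  also have "\<dots> = \<kappa> * emeasure T1 A1"
    using sets(2) by (simp add: marginal emeasure_density nn_integral_cmult_indicator)
  finally have TA: "emeasure T (\<pi> -` A1) = \<kappa> * emeasure T1 A1" .
  then have "\<kappa> \<noteq> 0" "\<kappa> \<noteq> \<top>"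
    using nondeg by (auto simp: ennreal_mult_eq_top_iff)
  then have cancel: "\<kappa> * (x / (\<kappa> * y)) = x / y" for x y :: ennreal
    using divide_mult_eq[of \<kappa> x y] by (simp add: divide_ennreal_def ac_simps)
  define g where "g v = indicator A1 v / emeasure T (\<pi> -` A1)" for v
  have [measurable]: "g \<in> borel_measurable borel" unfolding g_def by measurable
  have "distr (conditional_measure T (\<pi> -` A1)) borel \<pi> = distr (density T (\<lambda>u. g (\<pi> u))) borel \<pi>"
    by (simp add: conditional_measure_def g_def indicator_def)
  also have "\<dots> = density (distr T borel \<pi>) g"
    by (rule density_distr[symmetric]) (simp_all add: \<pi>T)
  also have "\<dots> = density T1 (\<lambda>v. \<kappa> * g v)"
    unfolding marginal using sets(2) by (subst density_density_eq) simp_all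
  also have "\<dots> = conditional_measure T1 A1"
    unfolding conditional_measure_def g_def TA
    by (simp add: cancel)
  finally show ?thesis .
qed

lemma distr_conditional_measure_invariant:
  assumes sets: "sets T = sets borel" and r [measurable]: "r \<in> borel_measurable borel"
    and invariant: "distr T borel r = T" and A [measurable]: "A \<in> sets borel" and rA: "r -` A = A"
  shows "distr (conditional_measure T A) borel r = conditional_measure T A"
proof -
  define h where "h u = indicator A u / emeasure T A" for u
  have [measurable]: "h \<in> borel_measurable borel" unfolding h_def by measurable
  have "h (r u) = h u" for u
    using rA by (simp add: h_def indicator_def) (metis vimage_eq)
  then have "density (distr T borel r) h = distr (density T h) borel r"
    using density_distr[of h borel r T] sets by simp
  moreover have "conditional_measure T A = density T h"
    by (simp add: conditional_measure_def h_def[abs_def])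
  ultimately show ?thesis
    by (simp add: invariant)
qed

section \<open>Reflecting the second block\<close>

definition reflect_Inr :: "real^('a::finite + 'b::finite) \<Rightarrow> real^('a + 'b)" where
  "reflect_Inr v = (\<chi> z. case_sum (\<lambda>_. 1) (\<lambda>_. -1) z * v $ z)"

lemma reflect_Inr_Inl [simp]: "reflect_Inr v $ Inl i = v $ Inl i"
  and reflect_Inr_Inr [simp]: "reflect_Inr v $ Inr k = - v $ Inr k"
  by (simp_all add: reflect_Inr_def)

lemma reflect_Inr_measurable [measurable]: "reflect_Inr \<in> borel_measurable borel"
  unfolding reflect_Inr_def by (intro vec_lambda_measurable) measurable

lemma lborel_distr_reflect_Inr:
  "distr lborel borel reflect_Inr = (lborel :: (real^('a::finite + 'b::finite)) measure)"
proof -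
  define c where "c j = (if j \<in> range (\<lambda>k. axis (Inr k) 1) then -1 else 1 :: real)"
    for j :: "real^('a + 'b)"
  have "(\<Sum>j\<in>Basis. (c j * (x \<bullet> j)) *\<^sub>R j) $ z = c (axis z 1) * x $ z" for x z
    using inner_sum_left_Basis[of "axis z 1" "\<lambda>j. c j * (x \<bullet> j)"]
    by (simp add: cart_eq_inner_axis)
  moreover have "c (axis z 1) = case_sum (\<lambda>_. 1) (\<lambda>_. -1) z" for z
    by (cases z) (auto simp: c_def axis_eq_axis)
  ultimately have "(\<Sum>j\<in>Basis. (c j * (x \<bullet> j)) *\<^sub>R j) = reflect_Inr x" for x
    by (simp add: vec_eq_iff reflect_Inr_def)
  moreover have "\<bar>c j\<bar> = 1" for j
    by (simp add: c_def)
  ultimately show ?thesis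
    using lborel_affine_euclidean[of c 0] by (simp add: c_def density_1)
qed

lemma inner_reflect_Inr [simp]: "reflect_Inr u \<bullet> reflect_Inr v = u \<bullet> v"
  by (simp add: inner_vec_def UNIV_Plus_UNIV[symmetric] sum.Plus del: UNIV_Plus_UNIV)

lemma matrix_vector_mult_reflect_Inr:
  fixes S :: "real^('a::finite + 'b::finite)^('a + 'b)"
  assumes "\<And>i k. S $ Inl i $ Inr k = 0" and "\<And>i k. S $ Inr k $ Inl i = 0"
  shows "S *v reflect_Inr v = reflect_Inr (S *v v)"
  using assms
  by (simp add: vec_eq_iff split_sum_all matrix_vector_mult_def UNIV_Plus_UNIV[symmetric] sum.Plus
      sum_negf del: UNIV_Plus_UNIV)

lemma quadratic_form_inverse_reflect_Inr:
  fixes S :: "real^('a::finite + 'b::finite)^('a + 'b)"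
  assumes S: "invertible S" and block: "\<And>i k. S $ Inl i $ Inr k = 0" "\<And>i k. S $ Inr k $ Inl i = 0"
  shows "reflect_Inr v \<bullet> (matrix_inv S *v reflect_Inr v) = v \<bullet> (matrix_inv S *v v)"
proof -
  define y where "y = matrix_inv S *v v"
  have "S *v y = v"
    by (simp add: y_def matrix_vector_mul_assoc matrix_inv_right[OF S])
  then have "matrix_inv S *v reflect_Inr v = reflect_Inr y"
    using matrix_inv_mult_cancel[OF S, of "reflect_Inr y"]
    by (simp add: matrix_vector_mult_reflect_Inr[OF block])
  then show ?thesis by (simp add: y_def)
qed

lemma mvt_reflect_Inr_invariant:
  fixes S :: "real^('a::finite + 'b::finite)^('a + 'b)"
  assumes "invertible S" and "\<And>i k. S $ Inl i $ Inr k = 0" "\<And>i k. S $ Inr k $ Inl i = 0"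
  shows "distr (mvt 0 S nu) borel reflect_Inr = mvt 0 S nu"
proof -
  have "mvt_density 0 S nu (reflect_Inr v) = mvt_density 0 S nu v" for v
    using quadratic_form_inverse_reflect_Inr[OF assms] by (simp add: mvt_density_zero)
  moreover have "density (distr lborel borel reflect_Inr) (\<lambda>v. ennreal (mvt_density 0 S nu v))
      = distr (density lborel (\<lambda>v. ennreal (mvt_density 0 S nu (reflect_Inr v)))) borel reflect_Inr"
    by (rule density_distr) measurable
  ultimately show ?thesis
    by (simp add: mvt_def lborel_distr_reflect_Inr)
qed

section \<open>The unified skew-t distribution\<close>

definition selection_set :: "real^'m::finite \<Rightarrow> (real^('m + 'd::finite)) set" where
  "selection_set tau = {u. \<forall>i. u $ Inl i + tau $ i > 0}"

definition SUT_transform :: "real^'d::finite \<Rightarrow> real^'d^'d \<Rightarrow> real^('m::finite + 'd) \<Rightarrow> real^'d" where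
  "SUT_transform xi Om u = (\<chi> j. xi $ j + omega_vec Om $ j * u $ Inr j)"

lemma selection_set_measurable [measurable]: "selection_set tau \<in> sets borel"
  unfolding selection_set_def by measurable

lemma SUT_transform_measurable [measurable]: "SUT_transform xi Om \<in> borel_measurable borel"
  unfolding SUT_transform_def by (intro vec_lambda_measurable) measurable

lemma sets_conditional_measure [simp, measurable_cong]: "sets (conditional_measure T A) = sets T"
  by (simp add: conditional_measure_def)

lemma sets_SUT [simp, measurable_cong]: "sets (SUT xi Om Dl tau G nu) = sets borel"
  by (simp add: SUT_def Let_def)

lemma distr_distr_borel:
  assumes "sets M = sets borel" and "f \<in> borel_measurable borel" and "g \<in> borel_measurable borel"
  shows "distr (distr M borel f) borel g = distr M borel (\<lambda>x. g (f x))"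
  using distr_distr[of g borel borel f M] assms by (simp add: comp_def)

lemma SUT_conditional:
  "SUT xi Om Dl tau G nu
     = distr (conditional_measure (mvt 0 (Omega_star Om Dl G) nu) (selection_set tau)) borel
         (SUT_transform xi Om)"
  by (simp add: SUT_def Let_def conditional_measure_def selection_set_def SUT_transform_def[abs_def])

lemma SUT_selection_nondegenerate:
  fixes Dl :: "real^'m::finite^'d::finite"
  assumes "prob_space (SUT xi Om Dl tau G nu)"
  defines "T \<equiv> mvt 0 (Omega_star Om Dl G) nu"
  shows "emeasure T (selection_set tau) \<noteq> 0" and "emeasure T (selection_set tau) \<noteq> \<top>"
proof -
  have space: "space (conditional_measure T (selection_set tau)) = UNIV" "space T = UNIV"
    by (simp_all add: T_def sets_eq_imp_space_eq[of _ borel])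
  have "SUT_transform xi Om \<in> conditional_measure T (selection_set tau) \<rightarrow>\<^sub>M borel"
    unfolding T_def by measurable
  then have "emeasure (SUT xi Om Dl tau G nu) UNIV = emeasure (conditional_measure T (selection_set tau)) (space T)"
    unfolding SUT_conditional T_def[symmetric] by (subst emeasure_distr) (simp_all add: space)
  moreover have "emeasure (SUT xi Om Dl tau G nu) UNIV = 1"
    using prob_space.emeasure_space_1[OF assms(1)] by (simp add: sets_eq_imp_space_eq[of _ borel])
  ultimately have "1 = emeasure (conditional_measure T (selection_set tau)) (space T)"
    by simp
  also have "\<dots> = emeasure T (selection_set tau) / emeasure T (selection_set tau)"
    by (simp add: emeasure_conditional_measure_space T_def)
  finally have "emeasure T (selection_set tau) / emeasure T (selection_set tau) = 1" ..
  then show "emeasure T (selection_set tau) \<noteq> 0" "emeasure T (selection_set tau) \<noteq> \<top>"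
    by (auto simp: divide_ennreal_def)
qed

lemma SUT_centered:
  fixes Dl :: "real^'m::finite^'d::finite"
  shows "distr (SUT xi Om Dl tau G nu) borel (\<lambda>y. y - xi) = SUT 0 Om Dl tau G nu"
proof -
  have "SUT_transform xi Om u - xi = SUT_transform 0 Om u" for u :: "real^('m + 'd)"
    by (simp add: SUT_transform_def vec_eq_iff)
  then show ?thesis
    unfolding SUT_conditional by (subst distr_distr_borel) simp_all
qed

lemma SUT_symmetric:
  fixes Om :: "real^'d::finite^'d" and tau :: "real^'m::finite"
  assumes "invertible (Omega_star Om 0 G)"
  shows "distr (SUT 0 Om 0 tau G nu) borel uminus = SUT 0 Om 0 tau G nu"
proof -
  define C where "C = conditional_measure (mvt 0 (Omega_star Om 0 G) nu) (selection_set tau)"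
  have [simp]: "sets C = sets borel" by (simp add: C_def)
  have "distr (mvt 0 (Omega_star Om 0 G) nu) borel reflect_Inr = mvt 0 (Omega_star Om 0 G) nu"
    using assms by (intro mvt_reflect_Inr_invariant) (simp_all add: Omega_star_def)
  then have reflect: "distr C borel reflect_Inr = C"
    unfolding C_def by (intro distr_conditional_measure_invariant) (auto simp: selection_set_def)
  have "- SUT_transform 0 Om u = SUT_transform 0 Om (reflect_Inr u)" for u :: "real^('m + 'd)"
    by (simp add: SUT_transform_def vec_eq_iff)
  then have "distr (SUT 0 Om 0 tau G nu) borel uminus = distr (distr C borel reflect_Inr) borel (SUT_transform 0 Om)"
    unfolding SUT_conditional C_def[symmetric] by (simp add: distr_distr_borel)
  also have "\<dots> = SUT 0 Om 0 tau G nu"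
    unfolding reflect by (simp add: SUT_conditional C_def)
  finally show ?thesis .
qed

lemma omega_vec_reindex: "omega_vec (mat_reindex f Om) = vec_reindex f (omega_vec Om)"
  by (simp add: omega_vec_def mat_reindex_def vec_eq_iff)

lemma Omega_star_reindex:
  "mat_reindex (map_sum id f) (Omega_star Om Dl G) = Omega_star (mat_reindex f Om) (vec_reindex f Dl) G"
  by (simp add: vec_eq_iff split_sum_all mat_reindex_def Omega_star_def Omega_bar_def omega_vec_def)

lemma SUT_params_reindex:
  fixes f :: "'c::finite \<Rightarrow> 'd::finite" and Dl :: "real^'m::finite^'d"
  assumes "SUT_params Om Dl G nu" and "inj f"
  shows "SUT_params (mat_reindex f Om) (vec_reindex f Dl) G nu"
proof -
  have "inj (map_sum id f :: 'm + 'c \<Rightarrow> 'm + 'd)"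
    using \<open>inj f\<close> by (simp add: sum.inj_map)
  then show ?thesis
    using assms pos_def_mat_reindex[of "Omega_star Om Dl G" "map_sum id f :: 'm + 'c \<Rightarrow> 'm + 'd"]
    by (simp add: SUT_params_def pos_def_mat_reindex Omega_star_reindex)
qed

lemma bij_case_sum_reassoc:
  fixes \<rho> :: "'c + 'k \<Rightarrow> 'd"
  assumes "bij \<rho>"
  defines "\<sigma> \<equiv> case_sum (map_sum id (\<rho> \<circ> Inl)) (Inr \<circ> \<rho> \<circ> Inr) :: ('m + 'c) + 'k \<Rightarrow> 'm + 'd"
  shows "bij \<sigma>"
proof (rule bijI)
  have inj: "inj \<rho>" and surj: "surj \<rho>" using assms(1) by (simp_all add: bij_def)
  show "inj \<sigma>"
    unfolding inj_def \<sigma>_def by (auto simp: inj_eq[OF inj] map_sum_def split: sum.splits)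
  show "surj \<sigma>"
  proof (rule surjI)
    fix w :: "'m + 'd"
    show "\<sigma> (case w of Inl i \<Rightarrow> Inl (Inl i)
               | Inr d \<Rightarrow> (case inv \<rho> d of Inl c \<Rightarrow> Inl (Inr c) | Inr k \<Rightarrow> Inr k)) = w"
      using surj_f_inv_f[OF surj]
      by (auto simp: \<sigma>_def split: sum.splits) metis+
  qed
qed

lemma SUT_marginal:
  fixes \<rho> :: "'c::finite + 'k::finite \<Rightarrow> 'd::finite"
    and xi :: "real^'d" and Dl :: "real^'m::finite^'d"
  assumes \<rho>: "bij \<rho>" and params: "SUT_params Om Dl G nu"
    and prob: "prob_space (SUT xi Om Dl tau G nu)"
  defines "f \<equiv> \<rho> \<circ> Inl"
  shows "distr (SUT xi Om Dl tau G nu) borel (vec_reindex f)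
       = SUT (vec_reindex f xi) (mat_reindex f Om) (vec_reindex f Dl) tau G nu"
proof -
  (* groups the selection block U0 with the retained latent coordinates *)
  define \<sigma> :: "('m + 'c) + 'k \<Rightarrow> 'm + 'd" where "\<sigma> = case_sum (map_sum id f) (Inr \<circ> \<rho> \<circ> Inr)"
  define T where "T = mvt 0 (Omega_star Om Dl G) nu"
  have [simp, measurable_cong]: "sets T = sets borel" by (simp add: T_def)
  define \<pi> :: "real^('m + 'd) \<Rightarrow> real^('m + 'c)" where "\<pi> = vec_reindex (map_sum id f)"
  have \<sigma>_Inl: "\<sigma> \<circ> Inl = map_sum id f" by (simp add: \<sigma>_def case_sum_o_inj)
  have "bij \<sigma>" unfolding \<sigma>_def f_def by (rule bij_case_sum_reassoc[OF \<rho>])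
  then obtain \<kappa> where \<kappa>: "distr T borel \<pi>
      = density (mvt 0 (Omega_star (mat_reindex f Om) (vec_reindex f Dl) G) nu) (\<lambda>_. \<kappa>)"
    using params distr_mvt_vec_reindex_Inl[of \<sigma> "Omega_star Om Dl G" nu]
    by (auto simp: SUT_params_def T_def \<pi>_def \<sigma>_Inl Omega_star_reindex)
  have A: "selection_set tau = \<pi> -` selection_set tau"
    by (simp add: \<pi>_def selection_set_def)
  have conditional: "distr (conditional_measure T (\<pi> -` selection_set tau)) borel \<pi>
      = conditional_measure (mvt 0 (Omega_star (mat_reindex f Om) (vec_reindex f Dl) G) nu) (selection_set tau)"
    using SUT_selection_nondegenerate[OF prob] A
    by (intro distr_conditional_measure_vimage[OF _ _ _ \<kappa>]) (simp_all add: T_def \<pi>_def)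
  have "vec_reindex f (SUT_transform xi Om u)
      = SUT_transform (vec_reindex f xi) (mat_reindex f Om) (\<pi> u)" for u
    by (simp add: vec_eq_iff SUT_transform_def omega_vec_reindex \<pi>_def)
  then have "distr (SUT xi Om Dl tau G nu) borel (vec_reindex f)
      = distr (conditional_measure T (\<pi> -` selection_set tau)) borel
          (\<lambda>u. SUT_transform (vec_reindex f xi) (mat_reindex f Om) (\<pi> u))"
    unfolding SUT_conditional T_def[symmetric] by (simp add: distr_distr_borel flip: A)
  also have "\<dots> = distr (distr (conditional_measure T (\<pi> -` selection_set tau)) borel \<pi>) borel
      (SUT_transform (vec_reindex f xi) (mat_reindex f Om))"
    by (simp add: distr_distr_borel \<pi>_def)
  also have "\<dots> = SUT (vec_reindex f xi) (mat_reindex f Om) (vec_reindex f Dl) tau G nu"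
    by (simp add: conditional SUT_conditional)
  finally show ?thesis .
qed

lemma SUT_marginal_symmetric:
  fixes \<rho> :: "'c::finite + 'k::finite \<Rightarrow> 'd::finite"
    and xi :: "real^'d" and Dl :: "real^'m::finite^'d"
  assumes \<rho>: "bij \<rho>" and params: "SUT_params Om Dl G nu"
    and prob: "prob_space (SUT xi Om Dl tau G nu)"
    and unskewed: "vec_reindex (\<rho> \<circ> Inl) Dl = 0"
  defines "f \<equiv> \<rho> \<circ> Inl"
  shows "distr (SUT xi Om Dl tau G nu) borel (\<lambda>y. vec_reindex f (y - xi))
       = distr (SUT xi Om Dl tau G nu) borel (\<lambda>y. - vec_reindex f (y - xi))"
proof -
  define Q where "Q = SUT 0 (mat_reindex f Om) 0 tau G nu"
  have f: "inj f"
    unfolding f_def by (rule inj_compose[OF bij_is_inj[OF \<rho>] inj_Inl])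
  have "invertible (Omega_star (mat_reindex f Om) 0 G)"
    using SUT_params_reindex[OF params f] unskewed
    by (simp add: SUT_params_def f_def pos_def_mat_invertible)
  then have Q_symmetric: "distr Q borel uminus = Q"
    unfolding Q_def by (rule SUT_symmetric)
  have "vec_reindex f (y - xi) = vec_reindex f y - vec_reindex f xi" for y :: "real^'d"
    by (simp add: vec_eq_iff)
  then have "distr (SUT xi Om Dl tau G nu) borel (\<lambda>y. vec_reindex f (y - xi))
      = distr (distr (SUT xi Om Dl tau G nu) borel (vec_reindex f)) borel (\<lambda>z. z - vec_reindex f xi)"
    by (simp add: distr_distr_borel)
  also have "\<dots> = Q"
    using SUT_marginal[OF \<rho> params prob] unskewed by (simp add: SUT_centered Q_def f_def)
  finally have centered: "distr (SUT xi Om Dl tau G nu) borel (\<lambda>y. vec_reindex f (y - xi)) = Q" .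
  have "distr (SUT xi Om Dl tau G nu) borel (\<lambda>y. - vec_reindex f (y - xi))
      = distr (distr (SUT xi Om Dl tau G nu) borel (\<lambda>y. vec_reindex f (y - xi))) borel uminus"
    by (simp add: distr_distr_borel)
  then show ?thesis
    by (simp add: centered Q_symmetric)
qed

lemma bij_case_sum_Some_None: "bij (case_sum Some (\<lambda>_::1. None))"
  by (rule o_bij[where g = "case_option (Inr 1) Inl"])
    (auto simp: fun_eq_iff num1_eq_iff split: sum.split option.split)

lemma bij_case_sum_None_Some: "bij (case_sum (\<lambda>_::1. None) Some)"
  by (rule o_bij[where g = "case_option (Inl 1) Inr"])
    (auto simp: fun_eq_iff num1_eq_iff split: sum.split option.split)

theorem proposition7:
  fixes xi :: "real^('e::finite option)" and Om :: "real^('e option)^('e option)"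
    and Dl :: "real^('m::finite)^('e option)" and tau :: "real^'m" and G :: "real^'m^'m"
    and nu :: real and M :: "'s measure" and Y :: "'s \<Rightarrow> real^('e option)"
  assumes "SUT_params Om Dl G nu"
    and "prob_space M"
    and "Y \<in> borel_measurable M"
    and "distr M borel Y = SUT xi Om Dl tau G nu"
    and "\<forall>i j. Dl $ Some i $ j = 0"
  shows "distr M borel (\<lambda>s. (\<chi> i. Y s $ Some i - xi $ Some i))
           = distr M borel (\<lambda>s. (\<chi> i. - (Y s $ Some i - xi $ Some i)))
         \<and> (\<exists>(xi1 :: real^1) (Om1 :: real^1^1) (Dl1 :: real^'m^1) (tau1 :: real^'m) (G1 :: real^'m^'m) nu1.
           SUT_params Om1 Dl1 G1 nu1 \<and>
           distr M borel (\<lambda>s. (\<chi> i :: 1. Y s $ None)) = SUT xi1 Om1 Dl1 tau1 G1 nu1)"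
proof -
  let ?P = "SUT xi Om Dl tau G nu"
  have P: "prob_space ?P"
    using prob_space.prob_space_distr[OF assms(2,3)] assms(4) by simp
  have law: "distr M borel (\<lambda>s. g (Y s)) = distr ?P borel g" if "g \<in> borel_measurable borel" for g
    using distr_distr[OF that assms(3)] assms(4) by (simp add: comp_def)
  have "vec_reindex Some Dl = 0"
    using assms(5) by (simp add: vec_eq_iff)
  then have "distr M borel (\<lambda>s. vec_reindex Some (Y s - xi))
      = distr M borel (\<lambda>s. - vec_reindex Some (Y s - xi))"
    using SUT_marginal_symmetric[OF bij_case_sum_Some_None assms(1) P]
      law[of "\<lambda>y. vec_reindex Some (y - xi)"] law[of "\<lambda>y. - vec_reindex Some (y - xi)"]
    by (simp add: case_sum_o_inj)
  moreover have "distr M borel (\<lambda>s. vec_reindex (\<lambda>_::1. None) (Y s))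
      = SUT (vec_reindex (\<lambda>_. None) xi) (mat_reindex (\<lambda>_::1. None) Om) (vec_reindex (\<lambda>_. None) Dl) tau G nu"
    using SUT_marginal[OF bij_case_sum_None_Some assms(1) P] law[of "vec_reindex (\<lambda>_::1. None)"]
    by (simp add: case_sum_o_inj)
  moreover have "SUT_params (mat_reindex (\<lambda>_::1. None) Om) (vec_reindex (\<lambda>_. None) Dl) G nu"
    by (rule SUT_params_reindex[OF assms(1)]) (simp add: inj_def num1_eq_iff)
  moreover have "vec_reindex Some (y - xi) = (\<chi> i. y $ Some i - xi $ Some i)"
    and "- vec_reindex Some (y - xi) = (\<chi> i. - (y $ Some i - xi $ Some i))"
    and "vec_reindex (\<lambda>_::1. None) y = (\<chi> i. y $ None)" for y
    by (simp_all add: vec_eq_iff)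
  ultimately show ?thesis
    by auto blast
qed

end
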